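(* Let $G$ be a graph, $B\subseteq V(G)$ and $\ell\ge 1$. Then $B$ is a specified $\ell$-leaky forcing set of $G$ if and only if $B$ is an $(\ell-1)$-leaky forcing set of $G$ such that for every set $L\subseteq V(G)$ of $\ell-1$ vertex leaks and every $v\in V(G)\setminus B$ there exist forces $x\to v$ and $y\to v$ in $\mathcal{F}_L(B)$ with $x\neq y$.
   Context: All graphs are finite, simple and undirected. Zero forcing: a blue vertex $u$ with exactly one white neighbor $w$ may force $w$ (color it blue), written $u\to w$. From an initial blue set $B$, a forcing sequence is a chronologically ordered list of forces each valid when performed. A vertex leak is a vertex not allowed to perform any force; $B$ is an $\ell$-leaky forcing set if for every set of at most $\ell$ vertex leaks, exhaustively applying the forcing rule from $B$ (leaks never forcing) colors all of $V(G)$ blue. For $L\subseteq V(G)$, $\mathcal{F}_L(B)$ is the set of all forces $x\to v$ occurring in some forcing sequence from $B$ in which no vertex of $L$ performs a force. A specified leak is an ordered pair $v\to u$ of vertices indicating that $v$ is prohibited from forcing $u$. $B$ is a specified $\ell$-leaky forcing set if for every set of at most $\ell$ specified leaks, exhaustively applying the forcing rule from $B$ while never performing a prohibited force colors all of $V(G)$ blue. *)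

theory Defs
  imports Main
begin

definition simple_graph :: "'a set \<Rightarrow> ('a \<Rightarrow> 'a \<Rightarrow> bool) \<Rightarrow> bool" where
  "simple_graph V E \<longleftrightarrow> finite V \<and>
     (\<forall>u v. E u v \<longrightarrow> u \<in> V \<and> v \<in> V \<and> u \<noteq> v) \<and>
     (\<forall>u v. E u v \<longrightarrow> E v u)"

definition can_force :: "('a \<Rightarrow> 'a \<Rightarrow> bool) \<Rightarrow> 'a set \<Rightarrow> 'a \<Rightarrow> 'a \<Rightarrow> bool" where
  "can_force E S u w \<longleftrightarrow> u \<in> S \<and> E u w \<and> w \<notin> S \<and> (\<forall>x. E u x \<and> x \<noteq> w \<longrightarrow> x \<in> S)"

fun forcing_seq :: "('a \<Rightarrow> 'a \<Rightarrow> bool) \<Rightarrow> ('a \<Rightarrow> 'a \<Rightarrow> bool) \<Rightarrow> 'a set \<Rightarrow> ('a \<times> 'a) list \<Rightarrow> bool" where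
  "forcing_seq E ok S [] = True"
| "forcing_seq E ok S ((u, w) # fs) =
     (ok u w \<and> can_force E S u w \<and> forcing_seq E ok (insert w S) fs)"

definition final_blue :: "'a set \<Rightarrow> ('a \<times> 'a) list \<Rightarrow> 'a set" where
  "final_blue S fs = S \<union> snd ` set fs"

definition colors_all :: "'a set \<Rightarrow> ('a \<Rightarrow> 'a \<Rightarrow> bool) \<Rightarrow> ('a \<Rightarrow> 'a \<Rightarrow> bool) \<Rightarrow> 'a set \<Rightarrow> bool" where
  "colors_all V E ok B \<longleftrightarrow>
     (\<forall>fs. forcing_seq E ok B fs \<and> \<not> (\<exists>u w. ok u w \<and> can_force E (final_blue B fs) u w)
        \<longrightarrow> final_blue B fs = V)"

text \<open>l-leaky forcing set (vertex leaks: leaks never force).\<close>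
definition leaky_forcing_set :: "'a set \<Rightarrow> ('a \<Rightarrow> 'a \<Rightarrow> bool) \<Rightarrow> 'a set \<Rightarrow> nat \<Rightarrow> bool" where
  "leaky_forcing_set V E B l \<longleftrightarrow>
     (\<forall>L. L \<subseteq> V \<and> card L \<le> l \<longrightarrow> colors_all V E (\<lambda>u w. u \<notin> L) B)"

text \<open>specified l-leaky forcing set (specified leaks: prohibited ordered pairs v \<rightarrow> u).\<close>
definition specified_leaky_forcing_set :: "'a set \<Rightarrow> ('a \<Rightarrow> 'a \<Rightarrow> bool) \<Rightarrow> 'a set \<Rightarrow> nat \<Rightarrow> bool" where
  "specified_leaky_forcing_set V E B l \<longleftrightarrow>
     (\<forall>P. P \<subseteq> V \<times> V \<and> card P \<le> l \<longrightarrow> colors_all V E (\<lambda>u w. (u, w) \<notin> P) B)"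

definition forces_F :: "('a \<Rightarrow> 'a \<Rightarrow> bool) \<Rightarrow> 'a set \<Rightarrow> 'a set \<Rightarrow> ('a \<times> 'a) set" where
  "forces_F E L B = {f. \<exists>fs. forcing_seq E (\<lambda>u w. u \<notin> L) B fs \<and> f \<in> set fs}"

end

theory Submission
  imports Defs
begin

(* A vertex leak at x matters only at the end of an exhaustive forcing process, where it
   blocks the single force x could still perform.  Hence l - 1 vertex leaks together with one
   prohibited force x -> v are simulated by l specified leaks, so v must also be forced by some
   vertex other than x in F_L(B).
   Conversely, let a forcing process stall under l specified leaks, with final blue set F, and
   let Y be the set of vertices that could still force at F; then card Y <= l.  If card Y = l,
   pick y in Y with white neighbour w and take the other l - 1 vertices of Y as vertex leaks:
   a forcing sequence colouring w must leave F, and the only force that can do so is y -> w,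
   contradicting the two forcers of w.  So card Y < l, Y is a harmless set of vertex leaks, and
   an exhaustive process with these leaks never leaves F; hence F = V. *)

definition maximal_forcing_seq ::
    "('a \<Rightarrow> 'a \<Rightarrow> bool) \<Rightarrow> ('a \<Rightarrow> 'a \<Rightarrow> bool) \<Rightarrow> 'a set \<Rightarrow> ('a \<times> 'a) list \<Rightarrow> bool" where
  "maximal_forcing_seq E ok S fs \<longleftrightarrow>
     forcing_seq E ok S fs \<and> \<not> (\<exists>u w. ok u w \<and> can_force E (final_blue S fs) u w)"

lemma colors_all_iff_maximal:
  "colors_all V E ok B \<longleftrightarrow> (\<forall>fs. maximal_forcing_seq E ok B fs \<longrightarrow> final_blue B fs = V)"
  by (simp add: colors_all_def maximal_forcing_seq_def)

lemma final_blue_Nil [simp]: "final_blue S [] = S"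
  by (simp add: final_blue_def)

lemma final_blue_Cons [simp]: "final_blue S ((u, w) # fs) = final_blue (insert w S) fs"
  by (auto simp: final_blue_def)

lemma can_force_unique: "can_force E F u w \<Longrightarrow> can_force E F u w' \<Longrightarrow> w = w'"
  unfolding can_force_def by blast

lemma can_force_mono:
  "can_force E S u w \<Longrightarrow> S \<subseteq> F \<Longrightarrow> w \<notin> F \<Longrightarrow> can_force E F u w"
  unfolding can_force_def by blast

lemma forcing_seq_mono:
  "forcing_seq E ok S fs \<Longrightarrow> (\<And>u w. ok u w \<Longrightarrow> ok' u w) \<Longrightarrow> forcing_seq E ok' S fs"
  by (induction fs arbitrary: S) auto

lemma forcing_seq_memD:
  "forcing_seq E ok S fs \<Longrightarrow> (u, w) \<in> set fs \<Longrightarrow> ok u w \<and> E u w"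
  by (induction fs arbitrary: S) (auto simp: can_force_def)

lemma forcing_seq_forced_distinct:
  "forcing_seq E ok S fs \<Longrightarrow> distinct (map snd fs) \<and> snd ` set fs \<inter> S = {}"
proof (induction fs arbitrary: S)
  case Nil
  then show ?case by simp
next
  case (Cons f fs)
  obtain u w where f: "f = (u, w)" by force
  then have "w \<notin> S" "forcing_seq E ok (insert w S) fs"
    using Cons.prems by (auto simp: can_force_def)
  then show ?case
    using Cons.IH[of "insert w S"] f by auto
qed

lemma forcing_seq_forced_once:
  assumes "forcing_seq E ok S fs" "(u, w) \<in> set fs" "(u', w) \<in> set fs"
  shows "u = u'"
proof -
  have "inj_on snd (set fs)"
    using forcing_seq_forced_distinct[OF assms(1)] by (simp add: distinct_map)
  then show ?thesis
    using inj_onD[of snd "set fs" "(u, w)" "(u', w)"] assms(2,3) by simp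
qed

lemma final_blue_subset:
  assumes "forcing_seq E ok S fs" "S \<subseteq> V" "\<And>u w. E u w \<Longrightarrow> w \<in> V"
  shows "final_blue S fs \<subseteq> V"
  using assms forcing_seq_memD[OF assms(1)] by (force simp: final_blue_def)

lemma forcing_seq_exit:
  assumes "forcing_seq E ok S fs" "S \<subseteq> F" "\<not> final_blue S fs \<subseteq> F"
  shows "\<exists>(u, w) \<in> set fs. ok u w \<and> can_force E F u w"
  using assms
proof (induction fs arbitrary: S)
  case Nil
  then show ?case by simp
next
  case (Cons f fs)
  obtain u w where f: "f = (u, w)" by force
  have uw: "ok u w" "can_force E S u w" and seq: "forcing_seq E ok (insert w S) fs"
    using Cons.prems(1) f by auto
  show ?case
  proof (cases "w \<in> F")
    case True
    then have "\<exists>(u, w) \<in> set fs. ok u w \<and> can_force E F u w"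
      using Cons.IH[OF seq] Cons.prems(2,3) f by simp
    then show ?thesis by auto
  next
    case False
    then have "can_force E F u w"
      using can_force_mono[OF uw(2) Cons.prems(2)] by blast
    then show ?thesis
      using uw(1) f by auto
  qed
qed

lemma maximal_forcing_seq_exists:
  assumes "finite V" "\<And>u w. E u w \<Longrightarrow> w \<in> V"
  shows "\<exists>fs. maximal_forcing_seq E ok S fs"
proof (induction "card (V - S)" arbitrary: S rule: less_induct)
  case less
  show ?case
  proof (cases "\<exists>u w. ok u w \<and> can_force E S u w")
    case False
    then show ?thesis
      by (intro exI[of _ "[]"]) (simp add: maximal_forcing_seq_def)
  next
    case True
    then obtain u w where uw: "ok u w" "can_force E S u w" by blast
    then have "w \<in> V - S"
      using assms(2) by (auto simp: can_force_def)
    then have "card ((V - S) - {w}) < card (V - S)"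
      using assms(1) by (intro card_Diff1_less) auto
    moreover have "V - insert w S = (V - S) - {w}"
      by auto
    ultimately obtain fs where "maximal_forcing_seq E ok (insert w S) fs"
      using less by presburger
    then show ?thesis
      using uw by (intro exI[of _ "(u, w) # fs"]) (simp add: maximal_forcing_seq_def)
  qed
qed

lemma maximal_forcing_seq_relax:
  assumes "maximal_forcing_seq E ok S fs" "\<And>u w. ok u w \<Longrightarrow> ok' u w"
    and "\<And>u w. ok' u w \<Longrightarrow> can_force E (final_blue S fs) u w \<Longrightarrow> ok u w"
  shows "maximal_forcing_seq E ok' S fs"
  using assms forcing_seq_mono unfolding maximal_forcing_seq_def by metis

lemma card_forces_from_le:
  assumes "finite L"
  shows "card {(x, w). x \<in> L \<and> can_force E F x w} \<le> card L"
proof -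
  let ?P = "{(x, w). x \<in> L \<and> can_force E F x w}"
  have "inj_on fst ?P"
    by (auto simp: inj_on_def dest: can_force_unique)
  then have "card ?P = card (fst ` ?P)"
    by (simp add: card_image)
  also have "\<dots> \<le> card L"
    using assms by (intro card_mono) auto
  finally show ?thesis .
qed

lemma specified_leaky_colors_all:
  assumes spec: "specified_leaky_forcing_set V E B l"
    and "finite V" and edges: "\<And>u w. E u w \<Longrightarrow> u \<in> V \<and> w \<in> V"
    and "L \<subseteq> V" "Q \<subseteq> V \<times> V" "card L + card Q \<le> l"
  shows "colors_all V E (\<lambda>u w. u \<notin> L \<and> (u, w) \<notin> Q) B"
  unfolding colors_all_iff_maximal
proof (intro allI impI)
  fix fs
  assume max: "maximal_forcing_seq E (\<lambda>u w. u \<notin> L \<and> (u, w) \<notin> Q) B fs"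
  define P where "P = {(x, w). x \<in> L \<and> can_force E (final_blue B fs) x w} \<union> Q"
  have "card P \<le> card L + card Q"
    unfolding P_def
    using card_Un_le card_forces_from_le[OF finite_subset[OF \<open>L \<subseteq> V\<close> \<open>finite V\<close>]]
    by (meson add_right_mono order_trans)
  moreover have "P \<subseteq> V \<times> V"
    using edges \<open>Q \<subseteq> V \<times> V\<close> by (auto simp: P_def can_force_def)
  ultimately have "colors_all V E (\<lambda>u w. (u, w) \<notin> P) B"
    using spec \<open>card L + card Q \<le> l\<close> unfolding specified_leaky_forcing_set_def by simp
  moreover have "maximal_forcing_seq E (\<lambda>u w. (u, w) \<notin> P) B fs"
    by (rule maximal_forcing_seq_relax[OF max]) (auto simp: P_def)
  ultimately show "final_blue B fs = V"
    unfolding colors_all_iff_maximal by blast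
qed

lemma specified_leaky_imp_leaky:
  assumes "specified_leaky_forcing_set V E B l"
    and "finite V" "\<And>u w. E u w \<Longrightarrow> u \<in> V \<and> w \<in> V"
  shows "leaky_forcing_set V E B (l - 1)"
  unfolding leaky_forcing_set_def
proof (intro allI impI)
  fix L
  assume "L \<subseteq> V \<and> card L \<le> l - 1"
  then have "L \<subseteq> V" "card L + card {} \<le> l"
    by auto
  from specified_leaky_colors_all[OF assms this(1) _ this(2)]
  show "colors_all V E (\<lambda>u w. u \<notin> L) B"
    by simp
qed

lemma forces_F_edge: "(x, v) \<in> forces_F E L B \<Longrightarrow> E x v"
  unfolding forces_F_def using forcing_seq_memD by fast

lemma forces_F_avoiding:
  assumes "colors_all V E (\<lambda>u w. u \<notin> L \<and> (u, w) \<noteq> (x0, v)) B"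
    and "finite V" "\<And>u w. E u w \<Longrightarrow> w \<in> V" "v \<in> V - B"
  shows "\<exists>x. x \<noteq> x0 \<and> (x, v) \<in> forces_F E L B"
proof -
  have "\<exists>fs. maximal_forcing_seq E (\<lambda>u w. u \<notin> L \<and> (u, w) \<noteq> (x0, v)) B fs"
    by (rule maximal_forcing_seq_exists[OF assms(2)]) (fact assms(3))
  then obtain fs where fs: "maximal_forcing_seq E (\<lambda>u w. u \<notin> L \<and> (u, w) \<noteq> (x0, v)) B fs"
    by blast
  then have "v \<in> final_blue B fs"
    using assms(1,4) unfolding colors_all_iff_maximal by blast
  then obtain x where x: "(x, v) \<in> set fs"
    using assms(4) by (force simp: final_blue_def)
  have seq: "forcing_seq E (\<lambda>u w. u \<notin> L \<and> (u, w) \<noteq> (x0, v)) B fs"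
    using fs by (simp add: maximal_forcing_seq_def)
  have "forcing_seq E (\<lambda>u w. u \<notin> L) B fs"
    using seq by (rule forcing_seq_mono) simp
  then have "(x, v) \<in> forces_F E L B"
    using x unfolding forces_F_def by blast
  moreover have "x \<noteq> x0"
    using forcing_seq_memD[OF seq x] by blast
  ultimately show ?thesis by blast
qed

lemma specified_leaky_imp_two_forcers:
  assumes spec: "specified_leaky_forcing_set V E B l"
    and finV: "finite V" and edges: "\<And>u w. E u w \<Longrightarrow> u \<in> V \<and> w \<in> V"
    and "L \<subseteq> V" "card L = l - 1" "l \<ge> 1" and v: "v \<in> V - B"
  shows "\<exists>x y. (x, v) \<in> forces_F E L B \<and> (y, v) \<in> forces_F E L B \<and> x \<noteq> y"
proof -
  have other: "\<exists>x. x \<noteq> x0 \<and> (x, v) \<in> forces_F E L B" if "x0 \<in> V" for x0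
  proof -
    have "{(x0, v)} \<subseteq> V \<times> V" "card L + card {(x0, v)} \<le> l"
      using that v assms(5,6) by auto
    from specified_leaky_colors_all[OF spec finV edges \<open>L \<subseteq> V\<close> this]
    have "colors_all V E (\<lambda>u w. u \<notin> L \<and> (u, w) \<noteq> (x0, v)) B"
      by simp
    then show ?thesis
      by (rule forces_F_avoiding[OF _ finV _ v]) (simp add: edges)
  qed
  obtain x where x: "(x, v) \<in> forces_F E L B"
    using other[of v] v by blast
  then have "x \<in> V"
    using edges forces_F_edge[OF x] by blast
  then obtain y where "y \<noteq> x" "(y, v) \<in> forces_F E L B"
    using other by blast
  then show ?thesis
    using x by blast
qed

lemma forcing_seq_unique_exit:
  assumes seq: "forcing_seq E ok S gs" and "S \<subseteq> F" "(z, w0) \<in> set gs" "w0 \<notin> F"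
    and y0: "can_force E F y0 w0" and only_y0: "\<And>u w. ok u w \<Longrightarrow> can_force E F u w \<Longrightarrow> u = y0"
  shows "z = y0"
proof -
  have "\<not> final_blue S gs \<subseteq> F"
    using assms(3,4) by (force simp: final_blue_def)
  then obtain u w where uw: "(u, w) \<in> set gs" "ok u w" "can_force E F u w"
    using forcing_seq_exit[OF seq \<open>S \<subseteq> F\<close>] by blast
  have "u = y0"
    by (rule only_y0[OF uw(2,3)])
  then have "w = w0"
    using can_force_unique[OF uw(3)] y0 by blast
  then show ?thesis
    using forcing_seq_forced_once[OF seq assms(3)] uw(1) \<open>u = y0\<close> by blast
qed

definition forcers :: "('a \<Rightarrow> 'a \<Rightarrow> bool) \<Rightarrow> 'a set \<Rightarrow> 'a set" where
  "forcers E F = {y. \<exists>w. can_force E F y w}"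

lemma colors_all_imp_subset_stalled:
  assumes "colors_all V E (\<lambda>u w. u \<notin> Y) B" and "forcers E F \<subseteq> Y" "B \<subseteq> F"
    and "finite V" "\<And>u w. E u w \<Longrightarrow> w \<in> V"
  shows "V \<subseteq> F"
proof (rule ccontr)
  assume "\<not> V \<subseteq> F"
  have "\<exists>gs. maximal_forcing_seq E (\<lambda>u w. u \<notin> Y) B gs"
    by (rule maximal_forcing_seq_exists[OF assms(4)]) (fact assms(5))
  then obtain gs where gs: "maximal_forcing_seq E (\<lambda>u w. u \<notin> Y) B gs"
    by blast
  then have "\<not> final_blue B gs \<subseteq> F"
    using assms(1) \<open>\<not> V \<subseteq> F\<close> unfolding colors_all_iff_maximal by blast
  then have "\<exists>(u, w) \<in> set gs. u \<notin> Y \<and> can_force E F u w"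
    using forcing_seq_exit[OF _ \<open>B \<subseteq> F\<close>] gs by (simp add: maximal_forcing_seq_def)
  then show False
    using \<open>forcers E F \<subseteq> Y\<close> by (auto simp: forcers_def)
qed

lemma two_forcers_imp_card_forcers_ne:
  assumes two: "\<And>L v. L \<subseteq> V \<Longrightarrow> card L = l - 1 \<Longrightarrow> v \<in> V - B \<Longrightarrow>
      \<exists>x y. (x, v) \<in> forces_F E L B \<and> (y, v) \<in> forces_F E L B \<and> x \<noteq> y"
    and edges: "\<And>u w. E u w \<Longrightarrow> u \<in> V \<and> w \<in> V" and "B \<subseteq> F" "l \<ge> 1"
  shows "card (forcers E F) \<noteq> l"
proof
  let ?Y = "forcers E F"
  assume card_Y: "card ?Y = l"
  then obtain y0 w0 where y0: "y0 \<in> ?Y" "can_force E F y0 w0"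
    using \<open>l \<ge> 1\<close> by (force simp: forcers_def)
  have "?Y - {y0} \<subseteq> V" "card (?Y - {y0}) = l - 1"
    using edges y0(1) card_Y by (auto simp: forcers_def can_force_def)
  moreover have "w0 \<in> V - B" "w0 \<notin> F"
    using y0(2) edges \<open>B \<subseteq> F\<close> by (auto simp: can_force_def)
  ultimately obtain x y where "x \<noteq> y"
      "(x, w0) \<in> forces_F E (?Y - {y0}) B" "(y, w0) \<in> forces_F E (?Y - {y0}) B"
    using two by blast
  then obtain z where z: "z \<noteq> y0" "(z, w0) \<in> forces_F E (?Y - {y0}) B"
    by metis
  then obtain gs where gs: "forcing_seq E (\<lambda>u w. u \<notin> ?Y - {y0}) B gs" "(z, w0) \<in> set gs"
    unfolding forces_F_def by blast
  have "z = y0"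
    by (rule forcing_seq_unique_exit[OF gs(1) \<open>B \<subseteq> F\<close> gs(2) \<open>w0 \<notin> F\<close> y0(2)])
      (auto simp: forcers_def)
  then show False
    using z(1) by blast
qed

lemma leaky_two_forcers_imp_specified_leaky:
  assumes finV: "finite V" and edges: "\<And>u w. E u w \<Longrightarrow> u \<in> V \<and> w \<in> V"
    and "B \<subseteq> V" "l \<ge> 1"
    and leaky: "leaky_forcing_set V E B (l - 1)"
    and two: "\<And>L v. L \<subseteq> V \<Longrightarrow> card L = l - 1 \<Longrightarrow> v \<in> V - B \<Longrightarrow>
      \<exists>x y. (x, v) \<in> forces_F E L B \<and> (y, v) \<in> forces_F E L B \<and> x \<noteq> y"
  shows "specified_leaky_forcing_set V E B l"
  unfolding specified_leaky_forcing_set_def colors_all_iff_maximal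
proof (intro allI impI)
  fix P fs
  assume P: "P \<subseteq> V \<times> V \<and> card P \<le> l"
    and fs: "maximal_forcing_seq E (\<lambda>u w. (u, w) \<notin> P) B fs"
  define F where "F = final_blue B fs"
  have B_F: "B \<subseteq> F"
    by (simp add: F_def final_blue_def)
  have "forcers E F \<subseteq> fst ` P"
    using fs by (force simp: forcers_def F_def maximal_forcing_seq_def)
  moreover have "finite P"
    using P finV by (meson finite_SigmaI rev_finite_subset)
  ultimately have "card (forcers E F) \<le> card P"
    by (meson card_image_le card_mono finite_imageI order_trans)
  then have "card (forcers E F) \<le> l - 1"
    using P two_forcers_imp_card_forcers_ne[OF two edges B_F \<open>l \<ge> 1\<close>] by linarith
  moreover have "forcers E F \<subseteq> V"
    using edges by (auto simp: forcers_def can_force_def)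
  ultimately have "colors_all V E (\<lambda>u w. u \<notin> forcers E F) B"
    using leaky unfolding leaky_forcing_set_def by blast
  then have "V \<subseteq> F"
    by (rule colors_all_imp_subset_stalled[OF _ subset_refl B_F finV]) (use edges in blast)
  moreover have "F \<subseteq> V"
    using final_blue_subset[of E _ B fs V] fs \<open>B \<subseteq> V\<close> edges
    by (auto simp: F_def maximal_forcing_seq_def)
  ultimately show "final_blue B fs = V"
    by (simp add: F_def)
qed

theorem theorem3p1:
  fixes V :: "'a set" and E :: "'a \<Rightarrow> 'a \<Rightarrow> bool" and B :: "'a set" and l :: nat
  assumes "simple_graph V E" and "B \<subseteq> V" and "l \<ge> 1"
  shows "specified_leaky_forcing_set V E B l \<longleftrightarrow>
    (leaky_forcing_set V E B (l - 1) \<and>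
     (\<forall>L. L \<subseteq> V \<and> card L = l - 1 \<longrightarrow>
        (\<forall>v \<in> V - B. \<exists>x y. (x, v) \<in> forces_F E L B \<and> (y, v) \<in> forces_F E L B \<and> x \<noteq> y)))"
proof -
  have finV: "finite V" and edges: "\<And>u w. E u w \<Longrightarrow> u \<in> V \<and> w \<in> V"
    using assms(1) by (auto simp: simple_graph_def)
  show ?thesis
  proof (intro iffI conjI allI impI ballI)
    assume spec: "specified_leaky_forcing_set V E B l"
    show "leaky_forcing_set V E B (l - 1)"
      by (rule specified_leaky_imp_leaky[OF spec finV edges])
    fix L v
    assume "L \<subseteq> V \<and> card L = l - 1" and "v \<in> V - B"
    then show "\<exists>x y. (x, v) \<in> forces_F E L B \<and> (y, v) \<in> forces_F E L B \<and> x \<noteq> y"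
      using specified_leaky_imp_two_forcers[OF spec finV edges _ _ assms(3)] by blast
  next
    assume "leaky_forcing_set V E B (l - 1) \<and>
        (\<forall>L. L \<subseteq> V \<and> card L = l - 1 \<longrightarrow>
          (\<forall>v \<in> V - B. \<exists>x y. (x, v) \<in> forces_F E L B \<and> (y, v) \<in> forces_F E L B \<and> x \<noteq> y))"
    then show "specified_leaky_forcing_set V E B l"
      by (intro leaky_two_forcers_imp_specified_leaky[OF finV edges assms(2,3)]) auto
  qed
qed

end
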